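(* Let $(\Omega,\mathcal E_\Omega,\mathbb P)$ be a probability space, $X_{1:\infty}=(X_t)_{t\ge1}$ a measurable map into $(\underline{\mathbf S}_\infty,\underline{\mathcal S}_\infty)$ with $X_{1:T}$ its first $T$ components, $\Theta$ a Borel subset of $\mathbf R^p$ with Borel $\sigma$-algebra $\mathcal E_\Theta$, and $\theta_0\in\Theta$. For each $T$ let $\widehat{\mathbb P\circ{\theta^\bullet_T}^{-1}}$ be a data-dependent approximation which, for $T$ large enough, is a random probability measure from $\underline{\mathbf S}_\infty$ to $\Theta$: for all $B\in\mathcal E_\Theta$, $x_{1:\infty}\mapsto\widehat{\mathbb P\circ{\theta^\bullet_T}^{-1}}(B)$ is $\underline{\mathcal S}_\infty$-measurable, and it is a probability measure $\mathbb P$-a.s.; let $\hat F_{\theta^\bullet_T}(\theta):=\widehat{\mathbb P\circ{\theta^\bullet_T}^{-1}}(]-\infty,\theta])$ be its c.d.f. Let $\tilde\Sigma_T$ be $\sigma(X_{1:\infty})$-measurable $p\times p$ matrices, symmetric with probability tending to one, with $\tilde\Sigma_T\to\tilde\Sigma$ in probability for a positive-definite $\tilde\Sigma$, and let $\tilde\Sigma_T^{1/2}$ denote the Cholesky factor. Suppose, as $T\to\infty$: (a) $\tilde\theta_T\to\theta_0$ in probability, where $\tilde\theta_T$ is $\sigma(X_{1:\infty})/\mathcal E_\Theta$-measurable; and (b) for all $b\in\mathbf R^p$, $\hat F_{\theta^\bullet_T}(\tilde\theta_T+\tilde\Sigma_T^{1/2}b/\sqrt T)\to\mathfrak N(b;0;\grave\Sigma^{1/2})$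 in probability. Then $\rho_P(\hat F_{\theta^\bullet_T},\delta_{\theta_0})\to0$ in probability as $T\to\infty$.
   Context: $]-\infty,\theta]:=\prod_{j=1}^p]-\infty,\theta_j]$. $\mathfrak N(\cdot;0;\grave\Sigma^{1/2})$ is the c.d.f. of the centred Gaussian with covariance $\grave\Sigma$, a fixed $p\times p$ covariance matrix. $\rho_P$ is the Prokhorov metric on probability measures on $\Theta$, with a c.d.f. identified with its probability measure; $\delta_{\theta_0}$ is the Dirac mass at $\theta_0$. *)

theory Defs
  imports "HOL-Probability.Probability"
begin

definition vanishing_in_prob :: "'w measure \<Rightarrow> (nat \<Rightarrow> 'w \<Rightarrow> bool) \<Rightarrow> bool" where
  "vanishing_in_prob M E \<longleftrightarrow>
     (\<forall>\<delta>>0. eventually (\<lambda>T. \<exists>A\<in>sets M. {\<omega>\<in>space M. E T \<omega>} \<subseteq> A \<and> measure M A < \<delta>) sequentially)"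

definition conv_in_prob :: "'w measure \<Rightarrow> (nat \<Rightarrow> 'w \<Rightarrow> 'b::metric_space) \<Rightarrow> 'b \<Rightarrow> bool" where
  "conv_in_prob M Y c \<longleftrightarrow> (\<forall>\<epsilon>>0. vanishing_in_prob M (\<lambda>T \<omega>. dist (Y T \<omega>) c > \<epsilon>))"

definition prob_on :: "'a::topological_space set \<Rightarrow> ('a set \<Rightarrow> real) \<Rightarrow> bool" where
  "prob_on \<Theta> q \<longleftrightarrow> (\<exists>\<mu>. prob_space \<mu> \<and> sets \<mu> = sets (restrict_space borel \<Theta>) \<and>
                         (\<forall>B\<in>sets \<mu>. measure \<mu> B = q B))"

definition cdf_of :: "(real^'p) set \<Rightarrow> ((real^'p) set \<Rightarrow> real) \<Rightarrow> real^'p \<Rightarrow> real" where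
  "cdf_of \<Theta> q \<theta> = q {y\<in>\<Theta>. \<forall>j. y$j \<le> \<theta>$j}"

definition enlarge :: "'a::metric_space set \<Rightarrow> 'a set \<Rightarrow> real \<Rightarrow> 'a set" where
  "enlarge \<Theta> A \<epsilon> = {y\<in>\<Theta>. \<exists>a\<in>A. dist a y < \<epsilon>}"

definition prokhorov :: "'a::metric_space set \<Rightarrow> ('a set \<Rightarrow> real) \<Rightarrow> ('a set \<Rightarrow> real) \<Rightarrow> real" where
  "prokhorov \<Theta> q r = Inf {\<epsilon>. \<epsilon> > 0 \<and> (\<forall>A\<in>sets (restrict_space borel \<Theta>).
        q A \<le> r (enlarge \<Theta> A \<epsilon>) + \<epsilon> \<and> r A \<le> q (enlarge \<Theta> A \<epsilon>) + \<epsilon>)}"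

definition lower_triangular :: "real^('p::{finite,wellorder})^('p::{finite,wellorder}) \<Rightarrow> bool" where
  "lower_triangular L \<longleftrightarrow> (\<forall>i j. i < j \<longrightarrow> L$i$j = 0)"

definition chol :: "real^('p::{finite,wellorder})^('p::{finite,wellorder}) \<Rightarrow> real^('p::{finite,wellorder})^('p::{finite,wellorder})" where
  "chol A = (THE L. lower_triangular L \<and> (\<forall>i. L$i$i > 0) \<and> L ** transpose L = A)"

definition pos_def :: "real^'p^'p \<Rightarrow> bool" where
  "pos_def A \<longleftrightarrow> transpose A = A \<and> (\<forall>v. v \<noteq> 0 \<longrightarrow> v \<bullet> (A *v v) > 0)"

definition pos_semidef :: "real^'p^'p \<Rightarrow> bool" where
  "pos_semidef A \<longleftrightarrow> transpose A = A \<and> (\<forall>v. v \<bullet> (A *v v) \<ge> 0)"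

definition std_gauss :: "(real^'p) measure" where
  "std_gauss = density lborel (\<lambda>z. ennreal (\<Prod>i\<in>UNIV. std_normal_density (z$i)))"

definition gauss_cdf :: "real^'p^'p \<Rightarrow> real^'p \<Rightarrow> real" where
  "gauss_cdf S b = measure (distr std_gauss borel (\<lambda>z. (SOME A::real^'p^'p. A ** transpose A = S) *v z))
                           {y. \<forall>j. y$j \<le> b$j}"

end

theory Submission
  imports Defs
begin

text \<open>
  Let \<open>L\<^sub>T\<close> be the Cholesky factor of \<open>\<Sigma>\<^sub>T\<close>. Since \<open>\<Sigma>\<^sub>T\<close> is eventually a symmetric matrix
  near the positive definite \<open>\<Sigma>\<close>, \<open>L\<^sub>T\<close> is lower triangular with bounded entries and
  diagonal bounded away from \<open>0\<close>. This allows one to fix, independently of \<open>T\<close>, test vectors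
  \<open>u, b\<^sub>1, \<dots>, b\<^sub>p\<close> such that the Gaussian c.d.f. is almost \<open>1\<close> at \<open>u\<close> and almost \<open>0\<close> at each
  \<open>b\<^sub>j\<close>, and \<open>L\<^sub>T (b\<^sub>j - u)\<close> is nonnegative off coordinate \<open>j\<close>. For large \<open>T\<close> the points
  \<open>\<theta>\<^sub>T + L\<^sub>T v / \<surd>T\<close> (\<open>v = u, b\<^sub>j\<close>) are then close to \<open>\<theta>\<^sub>0\<close>, and the complement of a ball
  around \<open>\<theta>\<^sub>0\<close> is covered by the complement of the orthant below the \<open>u\<close>-point together with
  the orthants below the \<open>b\<^sub>j\<close>-points. By (b), outside events of vanishing probability, the
  approximating measure thus puts mass at most \<open>\<epsilon>\<close> outside the \<open>\<epsilon>\<close>-ball around \<open>\<theta>\<^sub>0\<close>,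
  which bounds its Prokhorov distance to the Dirac mass by \<open>\<epsilon>\<close>.
\<close>

section \<open>Cholesky factors\<close>

definition inner_mat :: "real^'n^'n \<Rightarrow> real^'n \<Rightarrow> real^'n \<Rightarrow> real" where
  "inner_mat A x y = x \<bullet> (A *v y)"

lemma inner_mat_commute:
  assumes "transpose A = A" shows "inner_mat A x y = inner_mat A y x"
proof -
  have "inner_mat A x y = (transpose A *v x) \<bullet> y"
    by (simp add: inner_mat_def dot_lmul_matrix)
  then show ?thesis using assms by (simp add: inner_mat_def inner_commute)
qed

lemma inner_mat_add_left: "inner_mat A (x + y) z = inner_mat A x z + inner_mat A y z"
  and inner_mat_scaleR_left: "inner_mat A (c *\<^sub>R x) z = c * inner_mat A x z"
  and inner_mat_sum_left: "inner_mat A (\<Sum>k\<in>K. f k) z = (\<Sum>k\<in>K. inner_mat A (f k) z)"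
  and inner_mat_diff_right: "inner_mat A z (x - y) = inner_mat A z x - inner_mat A z y"
  and inner_mat_scaleR_right: "inner_mat A z (c *\<^sub>R x) = c * inner_mat A z x"
  and inner_mat_sum_right: "inner_mat A z (\<Sum>k\<in>K. f k) = (\<Sum>k\<in>K. inner_mat A z (f k))"
  by (simp_all add: inner_mat_def inner_add_left inner_sum_left matrix_vector_mult_diff_distrib
      inner_diff_right matrix_vector_mult_scaleR linear_sum[OF matrix_vector_mul_linear] inner_sum_right)

definition gram_schmidt_step :: "real^('n::{finite,wellorder})^('n::{finite,wellorder}) \<Rightarrow> (('n::{finite,wellorder}) \<Rightarrow> real^('n::{finite,wellorder})) \<Rightarrow> ('n::{finite,wellorder}) \<Rightarrow> real^('n::{finite,wellorder})" where
  "gram_schmidt_step A g j = axis j 1 - (\<Sum>k\<in>{..<j}. inner_mat A (axis j 1) (g k) *\<^sub>R g k)"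

definition gram_schmidt :: "real^('n::{finite,wellorder})^('n::{finite,wellorder}) \<Rightarrow> ('n::{finite,wellorder}) \<Rightarrow> real^('n::{finite,wellorder})" where
  "gram_schmidt A = wfrec {(x, y). x < y}
     (\<lambda>g j. let w = gram_schmidt_step A g j in (1 / sqrt (inner_mat A w w)) *\<^sub>R w)"

abbreviation gram_schmidt_residual :: "real^('n::{finite,wellorder})^('n::{finite,wellorder}) \<Rightarrow> ('n::{finite,wellorder}) \<Rightarrow> real^('n::{finite,wellorder})" where
  "gram_schmidt_residual A j \<equiv> gram_schmidt_step A (gram_schmidt A) j"

lemma gram_schmidt_eq:
  "gram_schmidt A j = (1 / sqrt (inner_mat A (gram_schmidt_residual A j) (gram_schmidt_residual A j)))
     *\<^sub>R gram_schmidt_residual A j"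
proof -
  have "gram_schmidt_step A (cut (gram_schmidt A) {(x, y). x < y} j) j = gram_schmidt_residual A j"
    unfolding gram_schmidt_step_def by (intro arg_cong2[where f = "(-)"] sum.cong) (auto simp: cut_apply)
  then show ?thesis
    unfolding gram_schmidt_def by (subst wfrec[OF wellorder_class.wf]) (simp add: Let_def)
qed

lemma gram_schmidt_nth_eq_0: "j < i \<Longrightarrow> gram_schmidt A j $ i = 0"
proof (induction j arbitrary: i rule: less_induct)
  case (less j)
  then have "gram_schmidt_residual A j $ i = 0"
    by (simp add: gram_schmidt_step_def sum_component axis_def)
  then show ?case by (simp add: gram_schmidt_eq[of A j])
qed

lemma gram_schmidt_residual_nth_self: "gram_schmidt_residual A j $ j = 1"
  by (simp add: gram_schmidt_step_def sum_component gram_schmidt_nth_eq_0)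

lemma gram_schmidt_residual_pos:
  assumes "pos_def A"
  shows "inner_mat A (gram_schmidt_residual A j) (gram_schmidt_residual A j) > 0"
proof -
  have "gram_schmidt_residual A j \<noteq> 0"
    using gram_schmidt_residual_nth_self[of A j] by (metis zero_index zero_neq_one)
  then show ?thesis using assms by (simp add: pos_def_def inner_mat_def)
qed

lemma gram_schmidt_normalized:
  assumes "pos_def A" shows "inner_mat A (gram_schmidt A j) (gram_schmidt A j) = 1"
  using gram_schmidt_residual_pos[OF assms, of j]
  by (simp add: gram_schmidt_eq[of A j] inner_mat_scaleR_left inner_mat_scaleR_right)

lemma axis_gram_schmidt_expansion:
  assumes "pos_def A"
  shows "axis j 1 = sqrt (inner_mat A (gram_schmidt_residual A j) (gram_schmidt_residual A j)) *\<^sub>R gram_schmidt A j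
          + (\<Sum>k\<in>{..<j}. inner_mat A (axis j 1) (gram_schmidt A k) *\<^sub>R gram_schmidt A k)"
  using gram_schmidt_residual_pos[OF assms, of j]
  by (simp add: gram_schmidt_eq[of A j]) (simp add: gram_schmidt_step_def)

lemma gram_schmidt_orthogonal:
  assumes "pos_def A"
  shows "i < j \<Longrightarrow> inner_mat A (gram_schmidt A i) (gram_schmidt A j) = 0"
proof (induction j arbitrary: i rule: less_induct)
  case (less j)
  have comm: "\<And>x y. inner_mat A x y = inner_mat A y x"
    using assms inner_mat_commute by (auto simp: pos_def_def)
  have orthonormal: "inner_mat A (gram_schmidt A i) (gram_schmidt A k) = (if k = i then 1 else 0)"
    if "k < j" for k
    using less.IH[of i k] less.IH[of k i] less.prems that comm gram_schmidt_normalized[OF assms]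
    by (cases k i rule: linorder_cases) auto
  have "inner_mat A (gram_schmidt A i) (gram_schmidt_residual A j)
      = inner_mat A (gram_schmidt A i) (axis j 1)
        - (\<Sum>k\<in>{..<j}. inner_mat A (axis j 1) (gram_schmidt A k) * (if k = i then 1 else 0))"
    by (simp add: gram_schmidt_step_def inner_mat_diff_right inner_mat_sum_right
        inner_mat_scaleR_right orthonormal)
  also have "\<dots> = 0"
    using less.prems comm by (simp add: if_distrib sum.delta cong: if_cong)
  finally show ?case by (simp add: gram_schmidt_eq[of A j] inner_mat_scaleR_right)
qed

lemma inner_mat_axis_gram_schmidt:
  assumes "pos_def A" "i \<le> j"
  shows "inner_mat A (axis i 1) (gram_schmidt A j) =
    (if i = j then sqrt (inner_mat A (gram_schmidt_residual A j) (gram_schmidt_residual A j)) else 0)"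
proof -
  have orth: "\<And>k. k < j \<Longrightarrow> inner_mat A (gram_schmidt A k) (gram_schmidt A j) = 0"
    using gram_schmidt_orthogonal[OF assms(1)] by blast
  have "(\<Sum>k\<in>{..<i}. inner_mat A (axis i 1) (gram_schmidt A k) * inner_mat A (gram_schmidt A k) (gram_schmidt A j)) = 0"
    using assms(2) orth by (intro sum.neutral) auto
  then show ?thesis
    using orth[of i] gram_schmidt_normalized[OF assms(1), of j] assms(2)
    by (subst axis_gram_schmidt_expansion[OF assms(1), of i])
       (auto simp: inner_mat_add_left inner_mat_sum_left inner_mat_scaleR_left less_le)
qed

lemma lower_triangular_mult_transpose_nth:
  fixes L :: "real^('n::{finite,wellorder})^('n::{finite,wellorder})"
  assumes "lower_triangular L"
  shows "(L ** transpose L) $ i $ j = (\<Sum>k\<in>{..<j}. L$i$k * L$j$k) + L$i$j * L$j$j"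
proof -
  have U: "(UNIV :: 'n set) = {..<j} \<union> ({j} \<union> {j<..})" by auto
  have "(L ** transpose L) $ i $ j = (\<Sum>k\<in>UNIV. L$i$k * L$j$k)"
    by (simp add: matrix_matrix_mult_def transpose_def)
  also have "\<dots> = (\<Sum>k\<in>{..<j}. L$i$k * L$j$k) + (L$i$j * L$j$j + (\<Sum>k\<in>{j<..}. L$i$k * L$j$k))"
    unfolding U by (subst sum.union_disjoint, auto)+
  also have "(\<Sum>k\<in>{j<..}. L$i$k * L$j$k) = 0"
    using assms by (auto simp: lower_triangular_def intro!: sum.neutral)
  finally show ?thesis by simp
qed

text \<open>Column by column, the entries of \<open>L\<close> are determined by
  those of \<open>L L\<^sup>T\<close> and the earlier columns.\<close>

lemma lower_triangular_factor_unique: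
  fixes L1 L2 :: "real^('n::{finite,wellorder})^('n::{finite,wellorder})"
  assumes "lower_triangular L1" "lower_triangular L2" "\<forall>i. L1$i$i > 0" "\<forall>i. L2$i$i > 0"
    and "L1 ** transpose L1 = L2 ** transpose L2"
  shows "L1 = L2"
proof -
  have "\<forall>i. L1$i$j = L2$i$j" for j
  proof (induction j rule: less_induct)
    case (less j)
    have "(\<Sum>k\<in>{..<j}. L1$i$k * L1$j$k) = (\<Sum>k\<in>{..<j}. L2$i$k * L2$j$k)" for i
      using less.IH by (intro sum.cong) auto
    then have col: "L1$i$j * L1$j$j = L2$i$j * L2$j$j" for i
      using assms(5) lower_triangular_mult_transpose_nth[OF assms(1), of i j]
        lower_triangular_mult_transpose_nth[OF assms(2), of i j] by simp
    have "L1$j$j = L2$j$j"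
      using col[of j] assms(3,4) by (metis power2_eq_square less_imp_le power2_eq_imp_eq)
    then show ?case using col assms(4) by (metis mult_right_cancel less_irrefl)
  qed
  then show ?thesis by (simp add: vec_eq_iff)
qed

text \<open>Existence via Gram--Schmidt for \<open>\<langle>x, y\<rangle> = x \<bullet> A y\<close>: with \<open>G\<close> the matrix whose rows
  are the orthonormalised basis vectors, \<open>G A G\<^sup>T = 1\<close>, and \<open>L = A G\<^sup>T\<close> has entries
  \<open>\<langle>e\<^sub>i, g\<^sub>j\<rangle>\<close>, which vanish for \<open>i < j\<close>.\<close>

lemma chol_pos_def:
  fixes A :: "real^('n::{finite,wellorder})^('n::{finite,wellorder})"
  assumes "pos_def A"
  shows "lower_triangular (chol A)" "chol A ** transpose (chol A) = A"
    and "chol A $ i $ i = sqrt (inner_mat A (gram_schmidt_residual A i) (gram_schmidt_residual A i))"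
proof -
  have sym: "transpose A = A" using assms by (simp add: pos_def_def)
  define G where "G = (\<chi> j. gram_schmidt A j)"
  define L where "L = A ** transpose G"
  have "inner_mat A (axis i 1) v = (A *v v) $ i" for i v
    by (simp add: inner_mat_def inner_commute cart_eq_inner_axis)
  then have L_nth: "L $ i $ j = inner_mat A (axis i 1) (gram_schmidt A j)" for i j
    by (simp add: L_def G_def matrix_matrix_mult_def matrix_vector_mult_def transpose_def)
  have "(G ** L) $ i $ j = (if i = j then 1 else 0)" for i j
  proof -
    have "(G ** L) $ i $ j = inner_mat A (gram_schmidt A i) (gram_schmidt A j)"
      by (simp add: L_def G_def matrix_matrix_mult_def matrix_vector_mult_def inner_vec_def
          transpose_def inner_mat_def sum_distrib_left mult.assoc)
    also have "\<dots> = (if i = j then 1 else 0)"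
    proof (cases i j rule: linorder_cases)
      case greater
      then show ?thesis
        using gram_schmidt_orthogonal[OF assms, of j i] inner_mat_commute[OF sym] by simp
    qed (simp_all add: gram_schmidt_orthogonal[OF assms] gram_schmidt_normalized[OF assms])
    finally show ?thesis .
  qed
  then have "G ** L = mat 1" by (simp add: vec_eq_iff mat_def)
  then have LG: "L ** G = mat 1" using matrix_left_right_inverse by blast
  have "L ** transpose L = (L ** G) ** A"
    by (simp add: L_def matrix_transpose_mul sym matrix_mul_assoc)
  then have LL: "L ** transpose L = A" by (simp add: LG)
  have LT: "lower_triangular L"
    using inner_mat_axis_gram_schmidt[OF assms] by (auto simp: lower_triangular_def L_nth less_le)
  have L_diag: "L $ i $ i = sqrt (inner_mat A (gram_schmidt_residual A i) (gram_schmidt_residual A i))"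
    for i using inner_mat_axis_gram_schmidt[OF assms, of i i] by (simp add: L_nth)
  have pos: "\<forall>i. L $ i $ i > 0" using gram_schmidt_residual_pos[OF assms] by (simp add: L_diag)
  have "chol A = L"
    unfolding chol_def
  proof (rule the_equality)
    fix L' assume "lower_triangular L' \<and> (\<forall>i. 0 < L' $ i $ i) \<and> L' ** transpose L' = A"
    then show "L' = L" using lower_triangular_factor_unique[of L' L] LT pos LL by simp
  qed (use LT pos LL in simp)
  then show "lower_triangular (chol A)" "chol A ** transpose (chol A) = A"
    and "chol A $ i $ i = sqrt (inner_mat A (gram_schmidt_residual A i) (gram_schmidt_residual A i))"
    using LT LL L_diag by simp_all
qed

lemma pos_def_coercive:
  fixes S :: "real^'n^'n"
  assumes "pos_def S"
  obtains c where "c > 0" "\<And>v. c * (norm v)^2 \<le> v \<bullet> (S *v v)"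
proof -
  have cont: "continuous_on (sphere 0 1) (\<lambda>v. v \<bullet> (S *v v))"
    by (intro continuous_intros linear_continuous_on matrix_vector_mul_bounded_linear)
  have "axis undefined 1 \<in> sphere (0::real^'n) 1" by simp
  then obtain x where x: "x \<in> sphere 0 1" "\<forall>y\<in>sphere 0 1. x \<bullet> (S *v x) \<le> y \<bullet> (S *v y)"
    using continuous_attains_inf[OF compact_sphere _ cont] by blast
  have "v \<bullet> (S *v v) \<ge> (x \<bullet> (S *v x)) * (norm v)^2" for v
  proof (cases "v = 0")
    case False
    define u where "u = (1 / norm v) *\<^sub>R v"
    have "u \<in> sphere 0 1" using False by (simp add: u_def)
    then have "x \<bullet> (S *v x) \<le> u \<bullet> (S *v u)" using x(2) by blast
    also have "\<dots> = (v \<bullet> (S *v v)) / (norm v)^2"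
      by (simp add: u_def matrix_vector_mult_scaleR power2_eq_square divide_simps)
    finally show ?thesis using False by (simp add: field_simps)
  qed simp
  moreover have "x \<noteq> 0" using x(1) by auto
  then have "x \<bullet> (S *v x) > 0" using assms by (simp add: pos_def_def)
  ultimately show ?thesis using that by blast
qed

lemma norm_matrix_nth_le:
  fixes B :: "real^'n^'m"
  shows "\<bar>B$i$j\<bar> \<le> norm B"
  using component_le_norm_cart[of "B$i" j] Finite_Cartesian_Product.norm_nth_le[of B i] by linarith

lemma coercive_perturb:
  fixes S A :: "real^'n^'n"
  assumes "\<And>v. c * (norm v)^2 \<le> v \<bullet> (S *v v)"
    and "norm (A - S) \<le> \<delta>" and "real CARD('n) * real CARD('n) * \<delta> \<le> c / 2"
  shows "(c / 2) * (norm v)^2 \<le> v \<bullet> (A *v v)"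
proof -
  have "\<bar>(A - S)$i$j\<bar> \<le> \<delta>" for i j
    using norm_matrix_nth_le[of "A - S" i j] assms(2) by linarith
  then have "onorm ((*v) (A - S)) \<le> real CARD('n) * real CARD('n) * \<delta>"
    by (rule onorm_le_matrix_component)
  then have "onorm ((*v) (A - S)) * norm v \<le> (c / 2) * norm v"
    using assms(3) by (intro mult_right_mono) auto
  then have "norm ((A - S) *v v) \<le> (c / 2) * norm v"
    using onorm[OF matrix_vector_mul_bounded_linear, of "A - S" v] by linarith
  then have "norm v * norm ((A - S) *v v) \<le> norm v * ((c / 2) * norm v)"
    by (rule mult_left_mono) simp
  then have "\<bar>v \<bullet> ((A - S) *v v)\<bar> \<le> (c / 2) * (norm v)^2"
    using Cauchy_Schwarz_ineq2[of v "(A - S) *v v"] by (simp add: power2_eq_square mult_ac)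
  moreover have "v \<bullet> (A *v v) = v \<bullet> (S *v v) + v \<bullet> ((A - S) *v v)"
    by (simp add: matrix_vector_mult_diff_rdistrib inner_diff_right)
  ultimately show ?thesis using assms(1)[of v] by linarith
qed

lemma abs_nth_le_sqrt_diag:
  assumes "L ** transpose L = A"
  shows "\<bar>L$i$k\<bar> \<le> sqrt \<bar>A$i$i\<bar>"
proof -
  have "(L$i$k)^2 \<le> (\<Sum>l\<in>UNIV. (L$i$l)^2)" by (rule member_le_sum) auto
  also have "\<dots> = A$i$i"
    using assms[symmetric] by (simp add: matrix_matrix_mult_def transpose_def power2_eq_square)
  finally have "(L$i$k)^2 \<le> \<bar>A$i$i\<bar>" by linarith
  then show ?thesis using real_sqrt_le_mono by fastforce
qed

lemma chol_diag_ge: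
  fixes A :: "real^('n::{finite,wellorder})^('n::{finite,wellorder})"
  assumes "pos_def A" "c \<ge> 0" "\<And>v. c * (norm v)^2 \<le> v \<bullet> (A *v v)"
  shows "sqrt c \<le> chol A $ i $ i"
proof -
  let ?w = "gram_schmidt_residual A i"
  have "1 \<le> norm ?w"
    using component_le_norm_cart[of ?w i] gram_schmidt_residual_nth_self[of A i] by simp
  then have "c * 1 \<le> c * (norm ?w)^2"
    using assms(2) by (intro mult_left_mono) (simp_all add: one_le_power)
  also have "\<dots> \<le> inner_mat A ?w ?w" using assms(3) by (simp add: inner_mat_def)
  finally show ?thesis by (simp add: chol_pos_def(3)[OF assms(1)])
qed

lemma chol_bounds_near_pos_def:
  fixes S :: "real^('n::{finite,wellorder})^('n::{finite,wellorder})"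
  assumes "pos_def S"
  obtains \<delta> c C where "\<delta> > 0" "c > 0"
    "\<And>A. transpose A = A \<Longrightarrow> dist A S \<le> \<delta> \<Longrightarrow>
       lower_triangular (chol A) \<and> (\<forall>i. c \<le> chol A $ i $ i) \<and> (\<forall>i k. \<bar>chol A $ i $ k\<bar> \<le> C)"
proof -
  obtain c where c: "c > 0" "\<And>v. c * (norm v)^2 \<le> v \<bullet> (S *v v)"
    using pos_def_coercive[OF assms] by blast
  define n where "n = real CARD('n)"
  define \<delta> where "\<delta> = min 1 (c / 2 / (n * n))"
  have "n \<ge> 1" by (simp add: n_def Suc_le_eq)
  then have \<delta>: "\<delta> > 0" "n * n * \<delta> \<le> c / 2" "\<delta> \<le> 1"
    using c(1) by (auto simp: \<delta>_def field_simps min_def)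
  define C where "C = sqrt (Max (range (\<lambda>i. \<bar>S$i$i\<bar>)) + 1)"
  have "lower_triangular (chol A) \<and> (\<forall>i. sqrt (c / 2) \<le> chol A $ i $ i) \<and> (\<forall>i k. \<bar>chol A $ i $ k\<bar> \<le> C)"
    if sym: "transpose A = A" and close: "dist A S \<le> \<delta>" for A
  proof -
    have coercive: "(c / 2) * (norm v)^2 \<le> v \<bullet> (A *v v)" for v
      using coercive_perturb[OF c(2), of A \<delta>] close \<delta>(2) by (simp add: dist_norm n_def)
    have "v \<bullet> (A *v v) > 0" if "v \<noteq> 0" for v
    proof -
      have "0 < (c / 2) * (norm v)^2" using c(1) that by simp
      then show ?thesis using coercive[of v] by linarith
    qed
    then have pd: "pos_def A" using sym by (simp add: pos_def_def)
    have "\<bar>A$i$i\<bar> \<le> Max (range (\<lambda>i. \<bar>S$i$i\<bar>)) + 1" for i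
    proof -
      have "\<bar>S$i$i\<bar> \<le> Max (range (\<lambda>i. \<bar>S$i$i\<bar>))" by (rule Max_ge) auto
      moreover have "\<bar>A$i$i - S$i$i\<bar> \<le> 1"
        using norm_matrix_nth_le[of "A - S" i i] close \<delta>(3) by (simp add: dist_norm)
      ultimately show ?thesis by arith
    qed
    then have "\<bar>chol A $ i $ k\<bar> \<le> C" for i k
      using abs_nth_le_sqrt_diag[OF chol_pos_def(2)[OF pd], of i k] real_sqrt_le_mono
      unfolding C_def by (meson order_trans)
    then show ?thesis using chol_pos_def(1)[OF pd] chol_diag_ge[OF pd _ coercive] c(1) by simp
  qed
  then show ?thesis using that[OF \<delta>(1), of "sqrt (c / 2)" C] c(1) by auto
qed

section \<open>The limiting Gaussian c.d.f.\<close>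

lemma prob_space_std_gauss: "prob_space (std_gauss :: (real^'n) measure)"
proof
  have "ennreal (\<Prod>i\<in>UNIV. std_normal_density (z$i)) = (\<Prod>b\<in>Basis. ennreal (std_normal_density (z \<bullet> b)))"
    for z :: "real^'n"
  proof -
    have "ennreal (\<Prod>i\<in>UNIV. std_normal_density (z$i)) = (\<Prod>i\<in>UNIV. ennreal (std_normal_density (z \<bullet> axis i 1)))"
      by (simp add: prod_ennreal normal_density_nonneg cart_eq_inner_axis)
    also have "\<dots> = (\<Prod>b\<in>Basis. ennreal (std_normal_density (z \<bullet> b)))"
    proof -
      have B: "(Basis :: (real^'n) set) = (\<lambda>i. axis i 1) ` UNIV" by (auto simp: Basis_vec_def)
      show ?thesis unfolding B by (subst prod.reindex) (auto simp: inj_on_def axis_eq_axis)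
    qed
    finally show ?thesis .
  qed
  then have "emeasure (std_gauss :: (real^'n) measure) (space std_gauss)
        = (\<integral>\<^sup>+z. (\<Prod>b\<in>Basis. ennreal (std_normal_density (z \<bullet> b))) \<partial>(lborel :: (real^'n) measure))"
    unfolding std_gauss_def by (simp add: emeasure_density)
  also have "\<dots> = (\<Prod>b\<in>(Basis :: (real^'n) set). \<integral>\<^sup>+x. ennreal (std_normal_density x) \<partial>lborel)"
    by (rule nn_integral_lborel_prod) auto
  also have "(\<integral>\<^sup>+x. ennreal (std_normal_density x) \<partial>lborel) = 1"
    using prob_space.emeasure_space_1[OF prob_space_normal_density[where \<mu> = 0 and \<sigma> = 1]]
    by (simp add: emeasure_density)
  finally show "emeasure (std_gauss :: (real^'n) measure) (space std_gauss) = 1" by simp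
qed

text \<open>Whatever matrix \<open>SOME\<close> picks (even if no \<open>A\<close> satisfies \<open>A A\<^sup>T = S\<close>), \<open>gauss_cdf S\<close> is
  the c.d.f. of a probability measure.\<close>

lemma gauss_cdf_eq_measure:
  fixes S :: "real^'n^'n"
  obtains \<nu> where "prob_space \<nu>" "sets \<nu> = sets borel"
    "\<And>b. gauss_cdf S b = measure \<nu> {y. \<forall>j. y$j \<le> b$j}"
proof
  let ?\<nu> = "distr std_gauss borel (\<lambda>z. (SOME A::real^'n^'n. A ** transpose A = S) *v z)"
  have "(\<lambda>z. (SOME A::real^'n^'n. A ** transpose A = S) *v z) \<in> borel_measurable borel"
    by (intro borel_measurable_continuous_onI linear_continuous_on matrix_vector_mul_bounded_linear)
  then show "prob_space ?\<nu>"
    by (intro prob_space.prob_space_distr prob_space_std_gauss) (simp add: std_gauss_def)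
qed (simp_all add: gauss_cdf_def)

lemma orthant_in_borel: "{y::real^'n. \<forall>j. y$j \<le> c j} \<in> sets borel"
proof -
  have "{y::real^'n. \<forall>j. y$j \<le> c j} = (\<Inter>j. {y. y$j \<le> c j})" by auto
  moreover have "{y::real^'n. y$j \<le> c j} \<in> sets borel" for j by measurable
  ultimately show ?thesis by auto
qed

lemma gauss_cdf_diagonal_tendsto_1:
  fixes S :: "real^'n^'n"
  shows "(\<lambda>n. gauss_cdf S (\<chi> i. real n)) \<longlonglongrightarrow> 1"
proof -
  obtain \<nu> where \<nu>: "prob_space \<nu>" "sets \<nu> = sets borel"
    "\<And>b. gauss_cdf S b = measure \<nu> {y. \<forall>j. y$j \<le> b$j}"
    using gauss_cdf_eq_measure[of S] by blast
  interpret prob_space \<nu> by (fact \<nu>(1))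
  define A where "A n = {y::real^'n. \<forall>j. y$j \<le> real n}" for n
  have "incseq A"
    by (auto simp: incseq_def A_def) (meson of_nat_le_iff order_trans)
  moreover have "A n \<in> sets \<nu>" for n unfolding A_def \<nu>(2) by (rule orthant_in_borel)
  moreover have "\<Union>(range A) = space \<nu>"
  proof -
    have "y \<in> A (nat \<lceil>Max (range (\<lambda>j. y$j))\<rceil>)" for y
    proof -
      have "y$j \<le> Max (range (\<lambda>j. y$j))" for j by (rule Max_ge) auto
      then show ?thesis
        unfolding A_def using real_nat_ceiling_ge order_trans by blast
    qed
    then show ?thesis using sets_eq_imp_space_eq[OF \<nu>(2)] by auto
  qed
  ultimately have "(\<lambda>n. measure \<nu> (A n)) \<longlonglongrightarrow> 1"
    using finite_Lim_measure_incseq[of A] prob_space by auto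
  then show ?thesis by (simp add: \<nu>(3) A_def)
qed

lemma gauss_cdf_small_if_coordinate_small:
  fixes S :: "real^'n^'n"
  assumes "\<eta> > 0"
  obtains m :: nat where "\<And>b. b$j \<le> - real m \<Longrightarrow> gauss_cdf S b < \<eta>"
proof -
  obtain \<nu> where \<nu>: "prob_space \<nu>" "sets \<nu> = sets borel"
    "\<And>b. gauss_cdf S b = measure \<nu> {y. \<forall>j. y$j \<le> b$j}"
    using gauss_cdf_eq_measure[of S] by blast
  interpret prob_space \<nu> by (fact \<nu>(1))
  define A where "A n = {y::real^'n. y$j \<le> - real n}" for n
  have A_sets: "A n \<in> sets \<nu>" for n using \<nu>(2) by (simp add: A_def)
  have "\<exists>n. y \<notin> A n" for y
  proof -
    obtain n where "- y$j < real n" using reals_Archimedean2 by blast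
    then have "y \<notin> A n" by (simp add: A_def)
    then show ?thesis by blast
  qed
  then have "\<Inter>(range A) = {}" by blast
  moreover have "decseq A" by (auto simp: decseq_def A_def)
  ultimately have "(\<lambda>n. measure \<nu> (A n)) \<longlonglongrightarrow> 0"
    using finite_Lim_measure_decseq[of A] A_sets by auto
  from order_tendstoD(2)[OF this assms] obtain m where m: "measure \<nu> (A m) < \<eta>"
    by (auto simp: eventually_sequentially)
  have "gauss_cdf S b < \<eta>" if "b$j \<le> - real m" for b
  proof -
    have "{y. \<forall>j. y$j \<le> b$j} \<subseteq> A m"
      using that by (auto simp: A_def dest!: spec[of _ j])
    then have "measure \<nu> {y. \<forall>j. y$j \<le> b$j} \<le> measure \<nu> (A m)"
      using A_sets by (intro finite_measure_mono)
    then show ?thesis using m \<nu>(3) by simp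
  qed
  then show ?thesis using that by blast
qed

section \<open>Test points\<close>

definition stair_vec :: "real \<Rightarrow> ('n::{finite,wellorder}) \<Rightarrow> real \<Rightarrow> real^('n::{finite,wellorder})" where
  "stair_vec R j m = (\<chi> k. if k < j then 0 else if k = j then - m else m * R ^ card {..<k})"

lemma abs_stair_vec_nth_le:
  assumes "m \<ge> 0" "R \<ge> 1" "l < k"
  shows "\<bar>stair_vec R j m $ l\<bar> \<le> m * R ^ (card {..<k} - 1)"
proof -
  have "card {..<l} < card {..<k}" using assms(3) by (intro psubset_card_mono) auto
  then have "R ^ card {..<l} \<le> R ^ (card {..<k} - 1)" using assms(2) by (intro power_increasing) auto
  then have "m * R ^ card {..<l} \<le> m * R ^ (card {..<k} - 1)" using assms(1) by (rule mult_left_mono)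
  moreover have "m * 1 \<le> m * R ^ (card {..<k} - 1)" using assms by (intro mult_left_mono one_le_power)
  moreover have "0 \<le> m * R ^ card {..<l}" using assms(1,2) by simp
  ultimately show ?thesis using assms(1) by (simp add: stair_vec_def)
qed

text \<open>For \<open>k > j\<close>, the diagonal term \<open>L$k$k * m * R ^ card {..<k}\<close> of \<open>(L *v stair_vec R j m) $ k\<close>
  dominates the at most \<open>CARD('n)\<close> other nonzero terms, each of size at most
  \<open>C * m * R ^ (card {..<k} - 1)\<close>.\<close>

lemma lower_triangular_mult_stair_vec_nonneg:
  fixes L :: "real^('n::{finite,wellorder})^('n::{finite,wellorder})"
  assumes LT: "lower_triangular L" and bounded: "\<forall>i k. \<bar>L$i$k\<bar> \<le> C" and diag: "\<forall>i. c \<le> L$i$i"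
    and "m \<ge> 0" "R \<ge> 1" "C * real CARD('n) \<le> c * R" and "k \<noteq> j"
  shows "0 \<le> (L *v stair_vec R j m) $ k"
proof (cases "k < j")
  case True
  have "L$k$l * stair_vec R j m $ l = 0" for l
    using LT True by (cases "k < l") (auto simp: lower_triangular_def stair_vec_def)
  then have "(\<Sum>l\<in>UNIV. L$k$l * stair_vec R j m $ l) = 0" by (intro sum.neutral) auto
  then show ?thesis by (simp add: matrix_vector_mult_def)
next
  case False
  with \<open>k \<noteq> j\<close> have "j < k" by simp
  define r where "r = card {..<k}"
  have "card {..<j} < r" unfolding r_def using \<open>j < k\<close> by (intro psubset_card_mono) auto
  then have r_pos: "r = Suc (r - 1)" by simp
  define M where "M = m * R ^ (r - 1)"
  have "C \<ge> 0" using bounded by (meson abs_ge_zero order_trans)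
  have "M \<ge> 0" using assms(4,5) by (simp add: M_def)
  have entry_bound: "\<bar>stair_vec R j m $ l\<bar> \<le> M" if "l < k" for l
    unfolding M_def r_def using abs_stair_vec_nth_le[OF assms(4,5) that] .
  have "- (C * M) \<le> L$k$l * stair_vec R j m $ l" if "l \<noteq> k" for l
  proof (cases "k < l")
    case True then show ?thesis using LT \<open>C \<ge> 0\<close> \<open>M \<ge> 0\<close> by (simp add: lower_triangular_def)
  next
    case False
    then have "\<bar>L$k$l * stair_vec R j m $ l\<bar> \<le> C * M"
      unfolding abs_mult using that bounded entry_bound \<open>C \<ge> 0\<close> by (intro mult_mono) auto
    then show ?thesis by linarith
  qed
  then have "(\<Sum>l\<in>UNIV - {k}. - (C * M)) \<le> (\<Sum>l\<in>UNIV - {k}. L$k$l * stair_vec R j m $ l)"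
    by (intro sum_mono) auto
  moreover have "- (real CARD('n) * (C * M)) \<le> (\<Sum>l\<in>UNIV - {k}. - (C * M))"
  proof -
    have "real (card (UNIV - {k} :: 'n set)) \<le> real CARD('n)" by (simp add: card_mono)
    then show ?thesis using \<open>C \<ge> 0\<close> \<open>M \<ge> 0\<close> by (simp add: mult_right_mono)
  qed
  moreover have "real CARD('n) * (C * M) \<le> L$k$k * stair_vec R j m $ k"
  proof -
    have "R ^ r = R * R ^ (r - 1)" by (subst r_pos) simp
    moreover have "\<not> k < j" "k \<noteq> j" using \<open>j < k\<close> by auto
    ultimately have "stair_vec R j m $ k = R * M"
      by (simp add: stair_vec_def M_def r_def[symmetric])
    moreover have "real CARD('n) * (C * M) \<le> (c * R) * M"
      using mult_right_mono[OF assms(6) \<open>M \<ge> 0\<close>] by (simp add: mult_ac)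
    moreover have "(c * R) * M \<le> L$k$k * (R * M)"
      using diag assms(5) \<open>M \<ge> 0\<close> by (simp add: mult.assoc mult_right_mono)
    ultimately show ?thesis by simp
  qed
  moreover have "(L *v stair_vec R j m) $ k
      = L$k$k * stair_vec R j m $ k + (\<Sum>l\<in>UNIV - {k}. L$k$l * stair_vec R j m $ l)"
    by (simp add: matrix_vector_mult_def sum.remove)
  ultimately show ?thesis by linarith
qed

lemma stair_vec_nth_self: "stair_vec R j m $ j = - m"
  by (simp add: stair_vec_def)

lemma gauss_cdf_test_points:
  fixes S :: "real^('n::{finite,wellorder})^('n::{finite,wellorder})"
  assumes "\<eta> > 0" "c > 0"
  obtains u b where "1 - \<eta> < gauss_cdf S u" "\<And>j. gauss_cdf S (b j) < \<eta>"
    "\<And>L j k. lower_triangular L \<Longrightarrow> \<forall>i k. \<bar>L$i$k\<bar> \<le> C \<Longrightarrow> \<forall>i. c \<le> L$i$i \<Longrightarrow> k \<noteq> j \<Longrightarrow>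
       0 \<le> (L *v (b j - u)) $ k"
proof -
  from order_tendstoD(1)[OF gauss_cdf_diagonal_tendsto_1[of S], of "1 - \<eta>"] assms(1)
  obtain K :: nat where K: "1 - \<eta> < gauss_cdf S (\<chi> i. real K)"
    by (auto simp: eventually_sequentially)
  have "\<forall>j. \<exists>m::nat. \<forall>b. b$j \<le> - real m \<longrightarrow> gauss_cdf S b < \<eta>"
    using gauss_cdf_small_if_coordinate_small[OF assms(1)] by metis
  then obtain m :: "'n \<Rightarrow> nat" where m: "\<And>j b. b$j \<le> - real (m j) \<Longrightarrow> gauss_cdf S b < \<eta>"
    by metis
  define R where "R = max 1 (C * real CARD('n) / c)"
  have R: "R \<ge> 1" "C * real CARD('n) \<le> c * R"
    using assms(2) by (auto simp: R_def field_simps max_def)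
  define u where "u = ((\<chi> i. real K) :: real^('n::{finite,wellorder}))"
  define b where "b j = u + stair_vec R j (real K + real (m j))" for j
  have b_small: "gauss_cdf S (b j) < \<eta>" for j
    by (rule m[where j=j]) (simp add: b_def u_def stair_vec_nth_self)
  have b_orthant: "0 \<le> (L *v (b j - u)) $ k"
    if "lower_triangular L" "\<forall>i k. \<bar>L$i$k\<bar> \<le> C" "\<forall>i. c \<le> L$i$i" "k \<noteq> j" for L j k
    using lower_triangular_mult_stair_vec_nonneg[OF that(1-3) _ R that(4)] by (simp add: b_def)
  show ?thesis
    by (rule that[of u b, OF _ b_small b_orthant]) (use K in \<open>simp_all add: u_def\<close>)
qed

lemma eventually_norm_scaled_mult_less:
  fixes v :: "real^'n"
  assumes "r > 0"
  shows "eventually (\<lambda>T. \<forall>L::real^'n^'m. (\<forall>i k. \<bar>L$i$k\<bar> \<le> C) \<longrightarrow>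
           norm ((1 / sqrt (real T)) *\<^sub>R (L *v v)) < r) sequentially"
proof -
  define K where "K = real CARD('m) * real CARD('n) * C * norm v"
  have bound: "norm (L *v v) \<le> K" if "\<forall>i k. \<bar>L$i$k\<bar> \<le> C" for L :: "real^'n^'m"
  proof -
    have "onorm ((*v) L) \<le> real CARD('m) * real CARD('n) * C"
      using that by (intro onorm_le_matrix_component) blast
    then show ?thesis
      using onorm[OF matrix_vector_mul_bounded_linear, of L v] mult_right_mono[of _ _ "norm v"]
      unfolding K_def by (meson norm_ge_zero order_trans)
  qed
  obtain N :: nat where N: "(K / r)^2 < real N" using reals_Archimedean2 by blast
  have small: "K / sqrt (real T) < r" if "T \<ge> max 1 N" for T
  proof -
    have "K / r < sqrt (real T)"
      using N that real_less_rsqrt[of "K / r" "real T"] by (simp add: max_def split: if_splits)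
    then show ?thesis using assms that by (simp add: field_simps)
  qed
  have "norm ((1 / sqrt (real T)) *\<^sub>R (L *v v)) < r"
    if "T \<ge> max 1 N" "\<forall>i k. \<bar>L$i$k\<bar> \<le> C" for T and L :: "real^'n^'m"
  proof -
    have "norm ((1 / sqrt (real T)) *\<^sub>R (L *v v)) = norm (L *v v) / sqrt (real T)" by simp
    also have "\<dots> \<le> K / sqrt (real T)" using bound[OF that(2)] by (intro divide_right_mono) auto
    also have "\<dots> < r" using small[OF that(1)] .
    finally show ?thesis .
  qed
  then show ?thesis unfolding eventually_sequentially by blast
qed

section \<open>Events of vanishing probability\<close>

lemma vanishing_in_prob_disj:
  assumes "vanishing_in_prob M E1" "vanishing_in_prob M E2"
  shows "vanishing_in_prob M (\<lambda>T \<omega>. E1 T \<omega> \<or> E2 T \<omega>)"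
  unfolding vanishing_in_prob_def
proof (intro allI impI)
  fix \<delta> :: real assume "\<delta> > 0"
  then have "\<delta> / 2 > 0" by simp
  with assms have "eventually (\<lambda>T. \<exists>A\<in>sets M. {\<omega>\<in>space M. E1 T \<omega>} \<subseteq> A \<and> measure M A < \<delta> / 2) sequentially"
    "eventually (\<lambda>T. \<exists>A\<in>sets M. {\<omega>\<in>space M. E2 T \<omega>} \<subseteq> A \<and> measure M A < \<delta> / 2) sequentially"
    unfolding vanishing_in_prob_def by blast+
  then show "eventually (\<lambda>T. \<exists>A\<in>sets M. {\<omega>\<in>space M. E1 T \<omega> \<or> E2 T \<omega>} \<subseteq> A \<and> measure M A < \<delta>) sequentially"
  proof eventually_elim
    case (elim T)
    then obtain A1 A2 where A: "A1 \<in> sets M" "A2 \<in> sets M" "{\<omega>\<in>space M. E1 T \<omega>} \<subseteq> A1"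
      "{\<omega>\<in>space M. E2 T \<omega>} \<subseteq> A2" "measure M A1 < \<delta> / 2" "measure M A2 < \<delta> / 2" by blast
    have "measure M (A1 \<union> A2) \<le> measure M A1 + measure M A2" using A(1,2) by (rule measure_Un_le)
    with A show ?case by (intro bexI[of _ "A1 \<union> A2"]) auto
  qed
qed

lemma vanishing_in_prob_ex_finite:
  assumes "finite I" "\<And>i. i \<in> I \<Longrightarrow> vanishing_in_prob M (E i)"
  shows "vanishing_in_prob M (\<lambda>T \<omega>. \<exists>i\<in>I. E i T \<omega>)"
  using assms
proof (induction I rule: finite_induct)
  case empty
  show ?case unfolding vanishing_in_prob_def by (auto intro!: bexI[of _ "{}"])
next
  case (insert i I)
  then show ?case using vanishing_in_prob_disj[of M "E i"] by simp
qed

lemma vanishing_in_prob_mono: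
  assumes "vanishing_in_prob M E'" "eventually (\<lambda>T. \<forall>\<omega>\<in>space M. E T \<omega> \<longrightarrow> E' T \<omega>) sequentially"
  shows "vanishing_in_prob M E"
  unfolding vanishing_in_prob_def
proof (intro allI impI)
  fix \<delta> :: real assume "\<delta> > 0"
  with assms(1) have "eventually (\<lambda>T. \<exists>A\<in>sets M. {\<omega>\<in>space M. E' T \<omega>} \<subseteq> A \<and> measure M A < \<delta>) sequentially"
    unfolding vanishing_in_prob_def by blast
  with assms(2) show "eventually (\<lambda>T. \<exists>A\<in>sets M. {\<omega>\<in>space M. E T \<omega>} \<subseteq> A \<and> measure M A < \<delta>) sequentially"
    by eventually_elim blast
qed

lemma vanishing_in_prob_AE:
  assumes "eventually (\<lambda>T. AE \<omega> in M. \<not> E T \<omega>) sequentially"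
  shows "vanishing_in_prob M E"
  unfolding vanishing_in_prob_def
proof (intro allI impI)
  fix \<delta> :: real assume "\<delta> > 0"
  from assms show "eventually (\<lambda>T. \<exists>A\<in>sets M. {\<omega>\<in>space M. E T \<omega>} \<subseteq> A \<and> measure M A < \<delta>) sequentially"
  proof eventually_elim
    case (elim T)
    then obtain N where "{\<omega>\<in>space M. E T \<omega>} \<subseteq> N" "emeasure M N = 0" "N \<in> sets M"
      by (auto elim: AE_E)
    with \<open>\<delta> > 0\<close> show ?case by (auto simp: measure_def)
  qed
qed

lemma conv_in_prob_vanishing:
  "conv_in_prob M Y c \<Longrightarrow> \<epsilon> > 0 \<Longrightarrow> vanishing_in_prob M (\<lambda>T \<omega>. \<epsilon> < dist (Y T \<omega>) c)"
  unfolding conv_in_prob_def by blast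

lemma conv_in_probI:
  assumes "\<And>\<epsilon>. \<epsilon> > 0 \<Longrightarrow> \<exists>Bad. vanishing_in_prob M Bad \<and>
     eventually (\<lambda>T. \<forall>\<omega>\<in>space M. \<not> Bad T \<omega> \<longrightarrow> dist (Y T \<omega>) c \<le> \<epsilon>) sequentially"
  shows "conv_in_prob M Y c"
  unfolding conv_in_prob_def
proof (intro allI impI)
  fix \<epsilon> :: real assume "\<epsilon> > 0"
  then obtain Bad where Bad: "vanishing_in_prob M Bad"
    and close: "eventually (\<lambda>T. \<forall>\<omega>\<in>space M. \<not> Bad T \<omega> \<longrightarrow> dist (Y T \<omega>) c \<le> \<epsilon>) sequentially"
    using assms by blast
  show "vanishing_in_prob M (\<lambda>T \<omega>. \<epsilon> < dist (Y T \<omega>) c)"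
    using Bad by (rule vanishing_in_prob_mono) (rule eventually_mono[OF close], auto)
qed

section \<open>Prokhorov distance to a Dirac mass\<close>

lemma prob_on_measureE:
  assumes "prob_on \<Theta> q" "\<Theta> \<in> sets borel"
  obtains \<mu> where "prob_space \<mu>" "space \<mu> = \<Theta>"
    "\<And>B. B \<in> sets \<mu> \<longleftrightarrow> B \<subseteq> \<Theta> \<and> B \<in> sets borel"
    "\<And>B. B \<in> sets \<mu> \<Longrightarrow> measure \<mu> B = q B"
proof -
  obtain \<mu> where \<mu>: "prob_space \<mu>" "sets \<mu> = sets (restrict_space borel \<Theta>)"
    "\<forall>B\<in>sets \<mu>. measure \<mu> B = q B"
    using assms(1) unfolding prob_on_def by blast
  have "B \<in> sets \<mu> \<longleftrightarrow> B \<subseteq> \<Theta> \<and> B \<in> sets borel" for B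
    unfolding \<mu>(2) using assms(2) by (simp add: sets_restrict_space_iff)
  moreover have "space \<mu> = \<Theta>"
    using sets_eq_imp_space_eq[OF \<mu>(2)] by (simp add: space_restrict_space)
  ultimately show ?thesis using that \<mu>(1,3) by blast
qed

lemma prokhorov_le:
  assumes "\<epsilon> > 0"
    and "\<forall>A\<in>sets (restrict_space borel \<Theta>).
           q A \<le> r (enlarge \<Theta> A \<epsilon>) + \<epsilon> \<and> r A \<le> q (enlarge \<Theta> A \<epsilon>) + \<epsilon>"
  shows "0 \<le> prokhorov \<Theta> q r" "prokhorov \<Theta> q r \<le> \<epsilon>"
proof -
  let ?E = "{\<epsilon>. \<epsilon> > 0 \<and> (\<forall>A\<in>sets (restrict_space borel \<Theta>).
        q A \<le> r (enlarge \<Theta> A \<epsilon>) + \<epsilon> \<and> r A \<le> q (enlarge \<Theta> A \<epsilon>) + \<epsilon>)}"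
  have "\<epsilon> \<in> ?E" using assms by simp
  then show "prokhorov \<Theta> q r \<le> \<epsilon>" "0 \<le> prokhorov \<Theta> q r"
    unfolding prokhorov_def by (auto intro!: cInf_lower cInf_greatest bdd_belowI[of _ 0])
qed

lemma prokhorov_dirac_le:
  fixes \<Theta> :: "'a::metric_space set"
  assumes q: "prob_on \<Theta> q" and "\<Theta> \<in> sets borel" "\<theta>0 \<in> \<Theta>" "\<epsilon> > 0"
    and far: "q {y\<in>\<Theta>. \<epsilon> \<le> dist y \<theta>0} \<le> \<epsilon>"
  shows "0 \<le> prokhorov \<Theta> q (\<lambda>A. indicator A \<theta>0)" "prokhorov \<Theta> q (\<lambda>A. indicator A \<theta>0) \<le> \<epsilon>"
proof -
  obtain \<mu> where \<mu>: "prob_space \<mu>" "space \<mu> = \<Theta>"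
    "\<And>B. B \<in> sets \<mu> \<longleftrightarrow> B \<subseteq> \<Theta> \<and> B \<in> sets borel" "\<And>B. B \<in> sets \<mu> \<Longrightarrow> measure \<mu> B = q B"
    using prob_on_measureE[OF q assms(2)] by blast
  interpret prob_space \<mu> by (fact \<mu>(1))
  define Far where "Far = {y\<in>\<Theta>. \<epsilon> \<le> dist y \<theta>0}"
  have "Far = \<Theta> \<inter> - ball \<theta>0 \<epsilon>" by (auto simp: Far_def dist_commute)
  then have Far_sets: "Far \<in> sets \<mu>" using assms(2) \<mu>(3) by auto
  have "q A \<le> indicator (enlarge \<Theta> A \<epsilon>) \<theta>0 + \<epsilon> \<and> indicator A \<theta>0 \<le> q (enlarge \<Theta> A \<epsilon>) + \<epsilon>"
    if "A \<in> sets (restrict_space borel \<Theta>)" for A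
  proof
    have A: "A \<in> sets \<mu>" "A \<subseteq> \<Theta>" using that assms(2) \<mu>(3) by (auto simp: sets_restrict_space_iff)
    define E where "E = enlarge \<Theta> A \<epsilon>"
    have "E = \<Theta> \<inter> (\<Union>a\<in>A. ball a \<epsilon>)" by (auto simp: E_def enlarge_def)
    moreover have "(\<Union>a\<in>A. ball a \<epsilon>) \<in> sets borel" by (intro borel_open open_UN) auto
    ultimately have E_sets: "E \<in> sets \<mu>" using assms(2) \<mu>(3) by auto
    show "q A \<le> indicator (enlarge \<Theta> A \<epsilon>) \<theta>0 + \<epsilon>"
    proof (cases "\<theta>0 \<in> E")
      case True
      then show ?thesis using prob_le_1[of A] \<mu>(4)[OF A(1)] assms(4) by (simp add: E_def)
    next
      case False
      have "A \<subseteq> Far"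
      proof
        fix a assume "a \<in> A"
        then have "\<not> dist a \<theta>0 < \<epsilon>" using False assms(3) by (auto simp: E_def enlarge_def)
        then show "a \<in> Far" using A(2) \<open>a \<in> A\<close> by (auto simp: Far_def)
      qed
      then have "measure \<mu> A \<le> measure \<mu> Far" using Far_sets by (intro finite_measure_mono)
      then show ?thesis using False far \<mu>(4)[OF A(1)] \<mu>(4)[OF Far_sets] by (simp add: E_def Far_def)
    qed
    show "indicator A \<theta>0 \<le> q (enlarge \<Theta> A \<epsilon>) + \<epsilon>"
    proof (cases "\<theta>0 \<in> A")
      case True
      have "\<Theta> - Far \<subseteq> E"
      proof
        fix y assume "y \<in> \<Theta> - Far"
        then have "y \<in> \<Theta>" "dist \<theta>0 y < \<epsilon>" by (auto simp: Far_def dist_commute)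
        then show "y \<in> E" using True by (auto simp: E_def enlarge_def)
      qed
      then have "measure \<mu> (space \<mu> - Far) \<le> measure \<mu> E"
        using E_sets \<mu>(2) by (intro finite_measure_mono) auto
      then show ?thesis
        using True prob_compl[OF Far_sets] far \<mu>(4)[OF E_sets] \<mu>(4)[OF Far_sets]
        by (simp add: E_def Far_def)
    next
      case False
      then show ?thesis using \<mu>(4)[OF E_sets] measure_nonneg[of \<mu> E] assms(4) by (simp add: E_def)
    qed
  qed
  then have "\<forall>A\<in>sets (restrict_space borel \<Theta>). q A \<le> indicator (enlarge \<Theta> A \<epsilon>) \<theta>0 + \<epsilon>
      \<and> indicator A \<theta>0 \<le> q (enlarge \<Theta> A \<epsilon>) + \<epsilon>" by blast
  from prokhorov_le[OF assms(4) this]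
  show "0 \<le> prokhorov \<Theta> q (\<lambda>A. indicator A \<theta>0)" "prokhorov \<Theta> q (\<lambda>A. indicator A \<theta>0) \<le> \<epsilon>" .
qed

text \<open>Some coordinate satisfies \<open>y\<^sub>j \<le> \<theta>0\<^sub>j - r\<close>, as otherwise the \<open>\<ell>\<^sup>1\<close>-distance, hence the
  distance, from \<open>y\<close> to \<open>\<theta>0\<close> would be less than \<open>CARD('n) r\<close>.\<close>

lemma far_point_below_test_point:
  fixes y u \<theta>0 :: "real^'n" and b :: "'n \<Rightarrow> real^'n"
  assumes "real CARD('n) * r \<le> dist y \<theta>0" "dist u \<theta>0 < r" "\<And>j. dist (b j) \<theta>0 < r"
    and "\<And>j k. k \<noteq> j \<Longrightarrow> u$k \<le> b j $ k" and below_u: "\<forall>k. y$k \<le> u$k"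
  shows "\<exists>j. \<forall>k. y$k \<le> b j $ k"
proof -
  have coord: "\<bar>x$k - \<theta>0$k\<bar> < r" if "dist x \<theta>0 < r" for x k
    using component_le_norm_cart[of "x - \<theta>0" k] that by (simp add: dist_norm)
  obtain j where j: "y$j \<le> \<theta>0$j - r"
  proof (rule ccontr)
    assume "\<not> thesis"
    have "\<bar>(y - \<theta>0)$k\<bar> < r" for k
    proof -
      have "\<theta>0$k - r < y$k" using \<open>\<not> thesis\<close> that by (meson not_le)
      moreover have "y$k \<le> u$k" using below_u by blast
      moreover have "u$k < \<theta>0$k + r" using coord[OF assms(2), of k] by (simp add: abs_less_iff)
      ultimately show ?thesis by (simp add: abs_less_iff)
    qed
    then have "(\<Sum>k\<in>UNIV. \<bar>(y - \<theta>0)$k\<bar>) < (\<Sum>k\<in>(UNIV::'n set). r)" by (intro sum_strict_mono) auto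
    then have "norm (y - \<theta>0) < real CARD('n) * r" using norm_le_l1_cart[of "y - \<theta>0"] by simp
    then show False using assms(1) by (simp add: dist_norm)
  qed
  have "y$k \<le> b j $ k" for k
  proof (cases "k = j")
    case True
    then show ?thesis using j coord[OF assms(3)[of j], of j] by (simp add: abs_less_iff)
  next
    case False
    then show ?thesis using below_u assms(4) by (meson order_trans)
  qed
  then show ?thesis by blast
qed

lemma far_mass_le_cdf_test_points:
  fixes \<Theta> :: "(real^'n) set" and b :: "'n \<Rightarrow> real^'n"
  assumes q: "prob_on \<Theta> q" and "\<Theta> \<in> sets borel" and "real CARD('n) * r \<le> \<epsilon>"
    and "dist u \<theta>0 < r" "\<And>j. dist (b j) \<theta>0 < r" "\<And>j k. k \<noteq> j \<Longrightarrow> u$k \<le> b j $ k"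
  shows "q {y\<in>\<Theta>. \<epsilon> \<le> dist y \<theta>0} \<le> 1 - cdf_of \<Theta> q u + (\<Sum>j\<in>UNIV. cdf_of \<Theta> q (b j))"
proof -
  obtain \<mu> where \<mu>: "prob_space \<mu>" "space \<mu> = \<Theta>"
    "\<And>B. B \<in> sets \<mu> \<longleftrightarrow> B \<subseteq> \<Theta> \<and> B \<in> sets borel" "\<And>B. B \<in> sets \<mu> \<Longrightarrow> measure \<mu> B = q B"
    using prob_on_measureE[OF q assms(2)] by blast
  interpret prob_space \<mu> by (fact \<mu>(1))
  define below where "below x = {y\<in>\<Theta>. \<forall>j. y$j \<le> x$j}" for x :: "real^'n"
  have below_sets: "below x \<in> sets \<mu>" for x
    using assms(2) orthant_in_borel[of "\<lambda>j. x$j"] \<mu>(3) by (auto simp: below_def Int_def[symmetric])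
  have cdf: "cdf_of \<Theta> q x = measure \<mu> (below x)" for x
    using \<mu>(4)[OF below_sets] by (simp add: below_def cdf_of_def)
  define Far where "Far = {y\<in>\<Theta>. \<epsilon> \<le> dist y \<theta>0}"
  have "Far = \<Theta> \<inter> - ball \<theta>0 \<epsilon>" by (auto simp: Far_def dist_commute)
  then have Far_sets: "Far \<in> sets \<mu>" using assms(2) \<mu>(3) by auto
  have "Far \<subseteq> (\<Theta> - below u) \<union> (\<Union>j. below (b j))"
  proof
    fix y assume y: "y \<in> Far"
    show "y \<in> (\<Theta> - below u) \<union> (\<Union>j. below (b j))"
    proof (cases "y \<in> below u")
      case True
      have "real CARD('n) * r \<le> dist y \<theta>0" using y assms(3) by (simp add: Far_def)
      with True obtain j where "\<forall>k. y$k \<le> b j $ k"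
        using far_point_below_test_point[of r y \<theta>0 u b] assms(4-6) by (auto simp: below_def)
      then show ?thesis using y by (auto simp: below_def Far_def)
    qed (use y in \<open>simp add: Far_def\<close>)
  qed
  then have "measure \<mu> Far \<le> measure \<mu> ((\<Theta> - below u) \<union> (\<Union>j. below (b j)))"
    using below_sets \<mu>(2) by (intro finite_measure_mono) auto
  also have "\<dots> \<le> measure \<mu> (\<Theta> - below u) + measure \<mu> (\<Union>j. below (b j))"
    using below_sets \<mu>(2) by (intro measure_Un_le) auto
  also have "measure \<mu> (\<Union>j. below (b j)) \<le> (\<Sum>j\<in>UNIV. measure \<mu> (below (b j)))"
    using below_sets by (intro finite_measure_subadditive_finite) auto
  also have "measure \<mu> (\<Theta> - below u) = 1 - measure \<mu> (below u)"
    using prob_compl[OF below_sets[of u]] \<mu>(2) by simp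
  finally show ?thesis using \<mu>(4)[OF Far_sets] by (simp add: Far_def cdf)
qed

lemma prokhorov_dirac_le_of_test_points:
  fixes \<Theta> :: "(real^'n) set" and L :: "real^'n^'n" and b :: "'n \<Rightarrow> real^'n"
  assumes q: "prob_on \<Theta> q" and "\<Theta> \<in> sets borel" "\<theta>0 \<in> \<Theta>"
    and "real CARD('n) * r \<le> \<epsilon>" "2 * \<eta> + real CARD('n) * (2 * \<eta>) \<le> \<epsilon>"
    and "s \<ge> 0" "dist \<theta> \<theta>0 \<le> r / 2"
    and "norm (s *\<^sub>R (L *v u)) < r / 2" "\<And>j. norm (s *\<^sub>R (L *v b j)) < r / 2"
    and "\<And>j k. k \<noteq> j \<Longrightarrow> 0 \<le> (L *v (b j - u)) $ k"
    and "1 - 2 * \<eta> \<le> cdf_of \<Theta> q (\<theta> + s *\<^sub>R (L *v u))"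
    and "\<And>j. cdf_of \<Theta> q (\<theta> + s *\<^sub>R (L *v b j)) \<le> 2 * \<eta>"
  shows "dist (prokhorov \<Theta> q (\<lambda>A. indicator A \<theta>0)) 0 \<le> \<epsilon>"
proof -
  have close: "dist (\<theta> + s *\<^sub>R (L *v v)) \<theta>0 < r" if "norm (s *\<^sub>R (L *v v)) < r / 2" for v
  proof -
    have "dist (\<theta> + s *\<^sub>R (L *v v)) \<theta>0 = norm ((\<theta> - \<theta>0) + s *\<^sub>R (L *v v))"
      by (simp add: dist_norm algebra_simps)
    also have "\<dots> \<le> dist \<theta> \<theta>0 + norm (s *\<^sub>R (L *v v))"
      unfolding dist_norm by (rule norm_triangle_ineq)
    finally show ?thesis using that assms(7) by linarith
  qed
  have "0 < r" using assms(8) norm_ge_zero[of "s *\<^sub>R (L *v u)"] by linarith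
  then have "0 < real CARD('n) * r" by simp
  then have "\<epsilon> > 0" using assms(4) by linarith
  have "(\<theta> + s *\<^sub>R (L *v u)) $ k \<le> (\<theta> + s *\<^sub>R (L *v b j)) $ k" if "k \<noteq> j" for j k
    using mult_nonneg_nonneg[OF assms(6) assms(10)[OF that]]
    by (simp add: matrix_vector_mult_diff_distrib algebra_simps)
  with close[OF assms(8)] close[OF assms(9)]
  have "q {y\<in>\<Theta>. \<epsilon> \<le> dist y \<theta>0} \<le> 1 - cdf_of \<Theta> q (\<theta> + s *\<^sub>R (L *v u))
      + (\<Sum>j\<in>UNIV. cdf_of \<Theta> q (\<theta> + s *\<^sub>R (L *v b j)))"
    by (intro far_mass_le_cdf_test_points[OF q assms(2,4)])
  also have "\<dots> \<le> 2 * \<eta> + real CARD('n) * (2 * \<eta>)"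
    using assms(11) sum_mono[of UNIV "\<lambda>j. cdf_of \<Theta> q (\<theta> + s *\<^sub>R (L *v b j))" "\<lambda>_. 2 * \<eta>"] assms(12)
    by simp
  finally have "q {y\<in>\<Theta>. \<epsilon> \<le> dist y \<theta>0} \<le> \<epsilon>" using assms(5) by linarith
  with prokhorov_dirac_le[OF q assms(2,3) \<open>\<epsilon> > 0\<close>] show ?thesis by simp
qed

theorem lemma6:
  fixes M :: "'w measure" and S :: "'s measure" and X :: "'w \<Rightarrow> 's"
    and \<Theta> :: "(real^('p::{finite,wellorder})) set" and \<theta>0 :: "real^('p::{finite,wellorder})"
    and Q :: "nat \<Rightarrow> 's \<Rightarrow> (real^('p::{finite,wellorder})) set \<Rightarrow> real"
    and \<theta>t :: "nat \<Rightarrow> 'w \<Rightarrow> real^('p::{finite,wellorder})"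
    and \<Sigma>t :: "nat \<Rightarrow> 'w \<Rightarrow> real^('p::{finite,wellorder})^('p::{finite,wellorder})" and \<Sigma> :: "real^('p::{finite,wellorder})^('p::{finite,wellorder})" and \<Sigma>g :: "real^('p::{finite,wellorder})^('p::{finite,wellorder})"
  assumes "prob_space M"
    and "X \<in> M \<rightarrow>\<^sub>M S"
    and "\<Theta> \<in> sets borel" and "\<theta>0 \<in> \<Theta>"
    and "\<exists>T0. \<forall>T\<ge>T0. (\<forall>B\<in>sets (restrict_space borel \<Theta>). (\<lambda>x. Q T x B) \<in> borel_measurable S)
                      \<and> (AE \<omega> in M. prob_on \<Theta> (Q T (X \<omega>)))"
    and "\<And>T. \<Sigma>t T \<in> vimage_algebra (space M) X S \<rightarrow>\<^sub>M borel"
    and "vanishing_in_prob M (\<lambda>T \<omega>. transpose (\<Sigma>t T \<omega>) \<noteq> \<Sigma>t T \<omega>)"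
    and "conv_in_prob M \<Sigma>t \<Sigma>" and "pos_def \<Sigma>"
    and "pos_semidef \<Sigma>g"
    and "\<And>T. \<theta>t T \<in> vimage_algebra (space M) X S \<rightarrow>\<^sub>M restrict_space borel \<Theta>"
    and "conv_in_prob M \<theta>t \<theta>0"
    and "\<And>b. conv_in_prob M
           (\<lambda>T \<omega>. cdf_of \<Theta> (Q T (X \<omega>)) (\<theta>t T \<omega> + (1 / sqrt (real T)) *\<^sub>R (chol (\<Sigma>t T \<omega>) *v b)))
           (gauss_cdf \<Sigma>g b)"
  shows "conv_in_prob M (\<lambda>T \<omega>. prokhorov \<Theta> (Q T (X \<omega>)) (\<lambda>A. indicator A \<theta>0)) 0"
proof (rule conv_in_probI)
  fix \<epsilon> :: real assume "\<epsilon> > 0"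
  define r where "r = \<epsilon> / real CARD('p)"
  define \<eta> where "\<eta> = \<epsilon> / (4 * real CARD('p))"
  have "real CARD('p) \<ge> 1" by (simp add: Suc_le_eq)
  then have r: "r / 2 > 0" "real CARD('p) * r \<le> \<epsilon>"
    and \<eta>: "\<eta> > 0" "2 * \<eta> + real CARD('p) * (2 * \<eta>) \<le> \<epsilon>"
    using \<open>\<epsilon> > 0\<close> by (auto simp: r_def \<eta>_def field_simps)
  obtain \<delta> c C where "\<delta> > 0" "c > 0" and chol_near: "\<And>A. transpose A = A \<Longrightarrow> dist A \<Sigma> \<le> \<delta> \<Longrightarrow>
      lower_triangular (chol A) \<and> (\<forall>i. c \<le> chol A $ i $ i) \<and> (\<forall>i k. \<bar>chol A $ i $ k\<bar> \<le> C)"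
    using chol_bounds_near_pos_def[OF assms(9)] by blast
  obtain u b where u: "1 - \<eta> < gauss_cdf \<Sigma>g u" and b: "\<And>j. gauss_cdf \<Sigma>g (b j) < \<eta>"
    and orthant: "\<And>L j k. lower_triangular L \<Longrightarrow> \<forall>i k. \<bar>L$i$k\<bar> \<le> C \<Longrightarrow> \<forall>i. c \<le> L$i$i \<Longrightarrow>
      k \<noteq> j \<Longrightarrow> 0 \<le> (L *v (b j - u)) $ k"
    using gauss_cdf_test_points[OF \<eta>(1) \<open>c > 0\<close>, of \<Sigma>g C] by blast
  define F where "F v T \<omega> = cdf_of \<Theta> (Q T (X \<omega>))
    (\<theta>t T \<omega> + (1 / sqrt (real T)) *\<^sub>R (chol (\<Sigma>t T \<omega>) *v v))" for v T \<omega>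
  define Bad where "Bad T \<omega> \<longleftrightarrow> transpose (\<Sigma>t T \<omega>) \<noteq> \<Sigma>t T \<omega> \<or> \<delta> < dist (\<Sigma>t T \<omega>) \<Sigma>
    \<or> r / 2 < dist (\<theta>t T \<omega>) \<theta>0 \<or> (\<exists>v\<in>insert u (range b). \<eta> < dist (F v T \<omega>) (gauss_cdf \<Sigma>g v))
    \<or> \<not> prob_on \<Theta> (Q T (X \<omega>))" for T \<omega>
  have "vanishing_in_prob M Bad"
  proof -
    obtain T0 where "\<forall>T\<ge>T0. AE \<omega> in M. prob_on \<Theta> (Q T (X \<omega>))" using assms(5) by blast
    then have "vanishing_in_prob M (\<lambda>T \<omega>. \<not> prob_on \<Theta> (Q T (X \<omega>)))"
      by (intro vanishing_in_prob_AE) (auto simp: eventually_sequentially)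
    moreover have "vanishing_in_prob M
        (\<lambda>T \<omega>. \<exists>v\<in>insert u (range b). \<eta> < dist (F v T \<omega>) (gauss_cdf \<Sigma>g v))"
      unfolding F_def by (intro vanishing_in_prob_ex_finite conv_in_prob_vanishing[OF assms(13) \<eta>(1)]) simp
    ultimately show ?thesis unfolding Bad_def[abs_def]
      by (intro vanishing_in_prob_disj assms(7) conv_in_prob_vanishing[OF assms(8) \<open>\<delta> > 0\<close>]
          conv_in_prob_vanishing[OF assms(12) r(1)])
  qed
  moreover have "eventually (\<lambda>T. \<forall>v\<in>insert u (range b). \<forall>L::real^('p::{finite,wellorder})^('p::{finite,wellorder}). (\<forall>i k. \<bar>L$i$k\<bar> \<le> C) \<longrightarrow>
      norm ((1 / sqrt (real T)) *\<^sub>R (L *v v)) < r / 2) sequentially"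
    using r(1) by (intro eventually_ball_finite ballI finite.insertI finite_imageI finite)
      (rule eventually_norm_scaled_mult_less)
  then have "eventually (\<lambda>T. \<forall>\<omega>\<in>space M. \<not> Bad T \<omega> \<longrightarrow>
      dist (prokhorov \<Theta> (Q T (X \<omega>)) (\<lambda>A. indicator A \<theta>0)) 0 \<le> \<epsilon>) sequentially"
  proof eventually_elim
    case (elim T)
    show ?case
    proof (intro ballI impI)
      fix \<omega> assume "\<not> Bad T \<omega>"
      then have good: "transpose (\<Sigma>t T \<omega>) = \<Sigma>t T \<omega>" "dist (\<Sigma>t T \<omega>) \<Sigma> \<le> \<delta>"
        "dist (\<theta>t T \<omega>) \<theta>0 \<le> r / 2" "prob_on \<Theta> (Q T (X \<omega>))"
        "\<And>v. v \<in> insert u (range b) \<Longrightarrow> \<bar>F v T \<omega> - gauss_cdf \<Sigma>g v\<bar> \<le> \<eta>"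
        by (auto simp: Bad_def dist_real_def not_less)
      have L: "lower_triangular (chol (\<Sigma>t T \<omega>))" "\<forall>i k. \<bar>chol (\<Sigma>t T \<omega>) $ i $ k\<bar> \<le> C"
        "\<forall>i. c \<le> chol (\<Sigma>t T \<omega>) $ i $ i"
        using chol_near[OF good(1,2)] by auto
      have "norm ((1 / sqrt (real T)) *\<^sub>R (chol (\<Sigma>t T \<omega>) *v v)) < r / 2"
        if "v \<in> insert u (range b)" for v
        using elim L(2) that by blast
      moreover have "1 - 2 * \<eta> \<le> F u T \<omega>" using good(5)[of u] u by (auto simp: abs_le_iff)
      moreover have "F (b j) T \<omega> \<le> 2 * \<eta>" for j
        using good(5)[of "b j"] b[of j] by (auto simp: abs_le_iff)
      ultimately show "dist (prokhorov \<Theta> (Q T (X \<omega>)) (\<lambda>A. indicator A \<theta>0)) 0 \<le> \<epsilon>"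
        unfolding F_def
        by (intro prokhorov_dirac_le_of_test_points[OF good(4) assms(3,4) r(2) \<eta>(2) _ good(3)
            _ _ orthant[OF L]]) auto
    qed
  qed
  ultimately show "\<exists>Bad. vanishing_in_prob M Bad \<and> eventually (\<lambda>T. \<forall>\<omega>\<in>space M. \<not> Bad T \<omega> \<longrightarrow>
      dist (prokhorov \<Theta> (Q T (X \<omega>)) (\<lambda>A. indicator A \<theta>0)) 0 \<le> \<epsilon>) sequentially"
    by blast
qed

end
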